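(* Let $\mathcal{G}=(V,E)$ be a DAG with $V=[n]$, and let $i,j\in V$ be distinct and $K\subseteq V\setminus\{i,j\}$ such that $K$ does not $d$-separate $i$ from $j$ in $\mathcal{G}$. Let $\phi_\mathcal{G}^\ast(\det\Sigma_{\{i\}\cup K,\{j\}\cup K})=\prod_{\ell=1}^m f_\ell$ be a factorization into irreducible polynomials $f_\ell\in\mathbb{R}[\lambda,\omega]$, and let $\mathcal{V}(f_\ell)$ denote the zero set of $f_\ell$ in the parameter space $\mathbb{R}^E\times\mathbb{R}^n$. Then \[ \mathcal{M}_{\mathcal{G},i\perp\!\!\!\perp j|K}=\bigcup_{\ell=1}^m \phi_\mathcal{G}(\mathcal{V}(f_\ell))\cap \mathrm{PD}_n . \]
   Context: For a DAG $\mathcal{G}=(V,E)$ on $V=[n]$, let $\Lambda=(\lambda_{ij})$ be an $n\times n$ matrix with $\lambda_{ij}$ a free parameter if $i\to j\in E$ and $\lambda_{ij}=0$ otherwise, and $\Omega=\mathrm{diag}(\omega_1,\dots,\omega_n)$. The map $\phi_\mathcal{G}(\Lambda,\Omega)=(I-\Lambda)^{-T}\Omega(I-\Lambda)^{-1}$ is a polynomial map on $\mathbb{R}^E\times\mathbb{R}^n$ (since $\Lambda$ is nilpotent). The Gaussian DAG model is $\mathcal{M}_\mathcal{G}=\phi_\mathcal{G}(\mathbb{R}^E\times(0,\infty)^n)\subseteq\mathrm{PD}_n$, where $\mathrm{PD}_n$ is the cone of positive definite $n\times n$ matrices. $\mathbb{R}[\lambda,\omega]$ is the polynomial ring in the variables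 $\lambda_{ij}$ ($i\to j\in E$) and $\omega_1,\dots,\omega_n$, and $\phi_\mathcal{G}^\ast:\mathbb{R}[\sigma_{ab}:1\le a\le b\le n]\to\mathbb{R}[\lambda,\omega]$ is the ring homomorphism sending $\sigma_{ab}$ to the $(a,b)$ entry of $(I-\Lambda)^{-T}\Omega(I-\Lambda)^{-1}$. For a symmetric matrix $\Sigma$ and sets $A,B$, $\Sigma_{A,B}$ is the submatrix with rows $A$ and columns $B$. For a Gaussian with covariance $\Sigma$, $i\perp\!\!\!\perp j\mid K$ holds iff $\det\Sigma_{\{i\}\cup K,\{j\}\cup K}=0$; $\mathcal{M}_{i\perp\!\!\!\perp j|K}$ is the set of $\Sigma\in\mathrm{PD}_n$ with this property, and $\mathcal{M}_{\mathcal{G},i\perp\!\!\!\perp j|K}=\mathcal{M}_\mathcal{G}\cap\mathcal{M}_{i\perp\!\!\!\perp j|K}$. $d$-separation: $C$ $d$-separates $a$ and $b$ in $\mathcal{G}$ if every path between them contains a non-collider in $C$ or a collider which is not in $C$ and has no descendant in $C$ (a collider on a path is a node $k$ with consecutive edges $u\to k\leftarrow w$). *)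

theory Defs
  imports "HOL-Library.Poly_Mapping"
    "Jordan_Normal_Form.Determinant"
    "Jordan_Normal_Form.Gauss_Jordan_Elimination"
    "Jordan_Normal_Form.DL_Submatrix"
begin

definition is_dag :: "nat \<Rightarrow> (nat \<times> nat) set \<Rightarrow> bool" where
  "is_dag n E \<longleftrightarrow> E \<subseteq> {0..<n} \<times> {0..<n} \<and> acyclic E"

definition is_path :: "(nat \<times> nat) set \<Rightarrow> nat \<Rightarrow> nat \<Rightarrow> nat list \<Rightarrow> bool" where
  "is_path E a b ps \<longleftrightarrow> ps \<noteq> [] \<and> hd ps = a \<and> last ps = b \<and> distinct ps \<and>
     (\<forall>k. Suc k < length ps \<longrightarrow> (ps ! k, ps ! Suc k) \<in> E \<or> (ps ! Suc k, ps ! k) \<in> E)"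

definition collider_at :: "(nat \<times> nat) set \<Rightarrow> nat list \<Rightarrow> nat \<Rightarrow> bool" where
  "collider_at E ps k \<longleftrightarrow> 0 < k \<and> Suc k < length ps \<and>
     (ps ! (k - 1), ps ! k) \<in> E \<and> (ps ! Suc k, ps ! k) \<in> E"

definition path_blocked :: "(nat \<times> nat) set \<Rightarrow> nat set \<Rightarrow> nat list \<Rightarrow> bool" where
  "path_blocked E C ps \<longleftrightarrow> (\<exists>k. 0 < k \<and> Suc k < length ps \<and>
     ((\<not> collider_at E ps k \<and> ps ! k \<in> C) \<or>
      (collider_at E ps k \<and> ps ! k \<notin> C \<and> (\<forall>c\<in>C. (ps ! k, c) \<notin> E\<^sup>+))))"

definition d_separates :: "(nat \<times> nat) set \<Rightarrow> nat set \<Rightarrow> nat \<Rightarrow> nat \<Rightarrow> bool" where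
  "d_separates E C a b \<longleftrightarrow> (\<forall>ps. is_path E a b ps \<longrightarrow> path_blocked E C ps)"

datatype pvar = Lam nat nat | Om nat

type_synonym rpoly = "(pvar \<Rightarrow>\<^sub>0 nat) \<Rightarrow>\<^sub>0 real"

definition Var :: "pvar \<Rightarrow> rpoly" where
  "Var v = Poly_Mapping.single (Poly_Mapping.single v 1) 1"

definition peval :: "rpoly \<Rightarrow> (pvar \<Rightarrow> real) \<Rightarrow> real" where
  "peval p x = (\<Sum>m\<in>Poly_Mapping.keys p. Poly_Mapping.lookup p m * (\<Prod>v\<in>Poly_Mapping.keys m. x v ^ Poly_Mapping.lookup m v))"

definition param_vars :: "nat \<Rightarrow> (nat \<times> nat) set \<Rightarrow> pvar set" where
  "param_vars n E = {Lam a b | a b. (a, b) \<in> E} \<union> {Om a | a. a < n}"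

definition param_ring :: "nat \<Rightarrow> (nat \<times> nat) set \<Rightarrow> rpoly set" where
  "param_ring n E = {p. \<forall>m\<in>Poly_Mapping.keys p. Poly_Mapping.keys m \<subseteq> param_vars n E}"

definition unit_in :: "rpoly set \<Rightarrow> rpoly \<Rightarrow> bool" where
  "unit_in R g \<longleftrightarrow> g \<in> R \<and> (\<exists>u\<in>R. g * u = 1)"

definition irreducible_in :: "rpoly set \<Rightarrow> rpoly \<Rightarrow> bool" where
  "irreducible_in R f \<longleftrightarrow> f \<in> R \<and> f \<noteq> 0 \<and> \<not> unit_in R f \<and>
     (\<forall>g\<in>R. \<forall>h\<in>R. f = g * h \<longrightarrow> unit_in R g \<or> unit_in R h)"

definition LamR :: "nat \<Rightarrow> (nat \<times> nat) set \<Rightarrow> (pvar \<Rightarrow> real) \<Rightarrow> real mat" where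
  "LamR n E x = mat n n (\<lambda>(a, b). if (a, b) \<in> E then x (Lam a b) else 0)"

definition OmR :: "nat \<Rightarrow> (pvar \<Rightarrow> real) \<Rightarrow> real mat" where
  "OmR n x = mat n n (\<lambda>(a, b). if a = b then x (Om a) else 0)"

definition phiR :: "nat \<Rightarrow> (nat \<times> nat) set \<Rightarrow> (pvar \<Rightarrow> real) \<Rightarrow> real mat" where
  "phiR n E x = (let B = the (mat_inverse (1\<^sub>m n - LamR n E x))
                 in transpose_mat B * OmR n x * B)"

definition LamS :: "nat \<Rightarrow> (nat \<times> nat) set \<Rightarrow> rpoly mat" where
  "LamS n E = mat n n (\<lambda>(a, b). if (a, b) \<in> E then Var (Lam a b) else 0)"

definition OmS :: "nat \<Rightarrow> rpoly mat" where
  "OmS n = mat n n (\<lambda>(a, b). if a = b then Var (Om a) else 0)"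

text \<open>(I - Lambda)^{-1} over the polynomial ring = sum_{k<n} Lambda^k (Lambda nilpotent).\<close>
fun neumann :: "nat \<Rightarrow> rpoly mat \<Rightarrow> nat \<Rightarrow> rpoly mat" where
  "neumann n A 0 = 0\<^sub>m n n"
| "neumann n A (Suc k) = 1\<^sub>m n + A * neumann n A k"

definition SigmaS :: "nat \<Rightarrow> (nat \<times> nat) set \<Rightarrow> rpoly mat" where
  "SigmaS n E = (let B = neumann n (LamS n E) n in transpose_mat B * OmS n * B)"

text \<open>phi_G^*(det Sigma_{{i} \<union> K, {j} \<union> K}); rows/columns in increasing order.\<close>
definition pullback_det :: "nat \<Rightarrow> (nat \<times> nat) set \<Rightarrow> nat \<Rightarrow> nat \<Rightarrow> nat set \<Rightarrow> rpoly" where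
  "pullback_det n E i j K = det (submatrix (SigmaS n E) ({i} \<union> K) ({j} \<union> K))"

definition pd_mat :: "nat \<Rightarrow> real mat \<Rightarrow> bool" where
  "pd_mat n S \<longleftrightarrow> S \<in> carrier_mat n n \<and> transpose_mat S = S \<and>
     (\<forall>v\<in>carrier_vec n. v \<noteq> 0\<^sub>v n \<longrightarrow> v \<bullet> (S *\<^sub>v v) > 0)"

definition model :: "nat \<Rightarrow> (nat \<times> nat) set \<Rightarrow> real mat set" where
  "model n E = phiR n E ` {x. \<forall>a<n. x (Om a) > 0}"

definition ci_model :: "nat \<Rightarrow> nat \<Rightarrow> nat \<Rightarrow> nat set \<Rightarrow> real mat set" where
  "ci_model n i j K = {S. pd_mat n S \<and> det (submatrix S ({i} \<union> K) ({j} \<union> K)) = 0}"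

end

theory Submission
  imports Defs
begin

(* Evaluation at a parameter point x is a ring homomorphism on R[lambda, omega], and for a DAG
   the matrix Lambda is nilpotent, so the truncated Neumann series used in SigmaS evaluates to
   the true inverse of I - Lambda.  Hence evaluating phi_G^*(det Sigma_{iK,jK}) = f_1 ... f_m at x
   gives det phiR(x)_{iK,jK}, which vanishes iff some f_l vanishes at x.  Positive definiteness of
   phiR(x) forces every omega_a > 0 (test it on v = (I - Lambda) e_a), so the points of
   phiR(V(f_l)) in PD_n already lie in the model. *)

definition monomial_value :: "(pvar \<Rightarrow>\<^sub>0 nat) \<Rightarrow> (pvar \<Rightarrow> real) \<Rightarrow> real" where
  "monomial_value m x = (\<Prod>v\<in>Poly_Mapping.keys m. x v ^ Poly_Mapping.lookup m v)"

lemma monomial_value_superset: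
  "finite S \<Longrightarrow> Poly_Mapping.keys m \<subseteq> S \<Longrightarrow>
    monomial_value m x = (\<Prod>v\<in>S. x v ^ Poly_Mapping.lookup m v)"
  unfolding monomial_value_def by (rule prod.mono_neutral_left) (auto simp: in_keys_iff)

lemma monomial_value_add: "monomial_value (a + b) x = monomial_value a x * monomial_value b x"
proof -
  let ?S = "Poly_Mapping.keys a \<union> Poly_Mapping.keys b"
  have "monomial_value (a + b) x = (\<Prod>v\<in>?S. x v ^ Poly_Mapping.lookup (a + b) v)"
    by (rule monomial_value_superset) (auto simp: keys_add)
  also have "\<dots> = (\<Prod>v\<in>?S. x v ^ Poly_Mapping.lookup a v) * (\<Prod>v\<in>?S. x v ^ Poly_Mapping.lookup b v)"
    by (simp add: lookup_add power_add prod.distrib)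
  also have "\<dots> = monomial_value a x * monomial_value b x"
    by (simp add: monomial_value_superset[symmetric])
  finally show ?thesis .
qed

lemma peval_eq_sum_monomial_value:
  "peval p x = (\<Sum>m\<in>Poly_Mapping.keys p. Poly_Mapping.lookup p m * monomial_value m x)"
  unfolding peval_def monomial_value_def ..

lemma peval_zero[simp]: "peval 0 x = 0"
  by (simp add: peval_def)

lemma peval_add: "peval (p + q) x = peval p x + peval q x"
  unfolding peval_eq_sum_monomial_value
  by (rule setsum_keys_plus_distrib) (auto simp: distrib_right)

lemma peval_single: "peval (Poly_Mapping.single m c) x = c * monomial_value m x"
  by (cases "c = 0") (auto simp: peval_eq_sum_monomial_value)

lemma update_eq_single_add:
  "a \<notin> Poly_Mapping.keys f \<Longrightarrow> Poly_Mapping.update a b f = Poly_Mapping.single a b + f"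
  by (rule poly_mapping_eqI) (auto simp: lookup_update lookup_add lookup_single in_keys_iff when_def)

lemma peval_single_mult:
  "peval (Poly_Mapping.single m c * q) x = c * monomial_value m x * peval q x"
proof (induction q rule: update_induct)
  case const
  then show ?case by simp
next
  case (update f a b)
  then show ?case
    by (simp add: update_eq_single_add distrib_left peval_add mult_single peval_single
        monomial_value_add algebra_simps)
qed

lemma peval_mult: "peval (p * q) x = peval p x * peval q x"
proof (induction p rule: update_induct)
  case const
  then show ?case by simp
next
  case (update f a b)
  then show ?case
    by (simp add: update_eq_single_add distrib_right peval_add peval_single_mult peval_single)
qed

lemma peval_one: "peval 1 x = 1"
  by (simp add: peval_eq_sum_monomial_value monomial_value_def)

interpretation peval: comm_ring_hom "\<lambda>p. peval p x"
  by unfold_locales (auto simp: peval_add peval_mult peval_one)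

lemma peval_Var[simp]: "peval (Var v) x = x v"
  by (simp add: Var_def peval_single monomial_value_def)

lemma card_trancl_image_less:
  assumes "acyclic E" "finite S" "E \<subseteq> S \<times> S" "(a, b) \<in> E"
  shows "card (E\<^sup>+ `` {b}) < card (E\<^sup>+ `` {a})"
proof (rule psubset_card_mono)
  show "finite (E\<^sup>+ `` {a})"
    using assms(2,3) trancl_subset_Sigma[OF assms(3)] by (auto intro: finite_subset)
  have "b \<in> E\<^sup>+ `` {a}" "b \<notin> E\<^sup>+ `` {b}"
    using assms(1,4) by (auto simp: acyclic_def)
  moreover have "E\<^sup>+ `` {b} \<subseteq> E\<^sup>+ `` {a}"
    using assms(4) by auto
  ultimately show "E\<^sup>+ `` {b} \<subset> E\<^sup>+ `` {a}"
    by blast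
qed

lemma card_trancl_image_relpow:
  assumes "acyclic E" "finite S" "E \<subseteq> S \<times> S" "(a, b) \<in> E ^^ k"
  shows "card (E\<^sup>+ `` {b}) + k \<le> card (E\<^sup>+ `` {a})"
  using assms(4)
proof (induction k arbitrary: b)
  case 0
  then show ?case by simp
next
  case (Suc k)
  then obtain c where "(a, c) \<in> E ^^ k" "(c, b) \<in> E"
    by auto
  with Suc.IH card_trancl_image_less[OF assms(1-3)] show ?case
    by fastforce
qed

lemma acyclic_not_in_relpow_card:
  assumes "acyclic E" "finite S" "E \<subseteq> S \<times> S" "a \<in> S"
  shows "(a, b) \<notin> E ^^ card S"
proof
  assume "(a, b) \<in> E ^^ card S"
  then have "card S \<le> card (E\<^sup>+ `` {a})"
    using card_trancl_image_relpow[OF assms(1-3)] by fastforce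
  moreover have "E\<^sup>+ `` {a} \<subseteq> S - {a}"
    using assms(1,3) trancl_subset_Sigma[OF assms(3)] by (auto simp: acyclic_def)
  then have "card (E\<^sup>+ `` {a}) < card S"
    using assms(2,4) by (metis card_Diff1_less card_mono finite_Diff le_less_trans)
  ultimately show False
    by simp
qed

lemma pow_mat_entry_relpow:
  fixes A :: "'a :: semiring_1 mat"
  assumes A: "A \<in> carrier_mat n n"
    and supp: "\<And>a b. a < n \<Longrightarrow> b < n \<Longrightarrow> A $$ (a, b) \<noteq> 0 \<Longrightarrow> (a, b) \<in> E"
    and ab: "a < n" "b < n" "(A ^\<^sub>m k) $$ (a, b) \<noteq> 0"
  shows "(a, b) \<in> E ^^ k"
  using ab
proof (induction k arbitrary: b)
  case 0
  with A show ?case by (auto split: if_splits)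
next
  case (Suc k)
  have "(A ^\<^sub>m k * A) $$ (a, b) = (\<Sum>c<n. (A ^\<^sub>m k) $$ (a, c) * A $$ (c, b))"
    using A Suc.prems by (auto simp: scalar_prod_def atLeast0LessThan intro!: sum.cong)
  with Suc.prems obtain c where "c < n" "(A ^\<^sub>m k) $$ (a, c) * A $$ (c, b) \<noteq> 0"
    by (metis (no_types, lifting) lessThan_iff pow_mat.simps(2) sum.neutral)
  with Suc.IH[of c] supp[of c b] Suc.prems show ?case
    by (metis mult_not_zero relpow_Suc_I)
qed

lemma dag_supported_pow_mat_eq_zero:
  fixes A :: "'a :: semiring_1 mat"
  assumes "is_dag n E" "A \<in> carrier_mat n n"
    and "\<And>a b. a < n \<Longrightarrow> b < n \<Longrightarrow> A $$ (a, b) \<noteq> 0 \<Longrightarrow> (a, b) \<in> E"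
  shows "A ^\<^sub>m n = 0\<^sub>m n n"
proof (rule eq_matI)
  fix a b assume "a < dim_row (0\<^sub>m n n)" "b < dim_col (0\<^sub>m n n)"
  then show "(A ^\<^sub>m n) $$ (a, b) = 0\<^sub>m n n $$ (a, b)"
    using assms pow_mat_entry_relpow[OF assms(2,3)]
      acyclic_not_in_relpow_card[of E "{0..<n}" a b]
    by (fastforce simp: is_dag_def)
qed (use assms(2) in auto)

lemma pow_mat_Suc_left:
  fixes A :: "'a :: semiring_1 mat"
  assumes A: "A \<in> carrier_mat n n"
  shows "A ^\<^sub>m Suc k = A * A ^\<^sub>m k"
proof (induction k)
  case 0
  with A show ?case by simp
next
  case (Suc k)
  have "A ^\<^sub>m Suc (Suc k) = (A * A ^\<^sub>m k) * A"
    unfolding pow_mat.simps(2)[of A "Suc k"] Suc ..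
  also have "\<dots> = A * A ^\<^sub>m Suc k"
    using A by (simp add: assoc_mult_mat[of _ n n _ n _ n])
  finally show ?case .
qed

lemma neumann_carrier[simp]: "A \<in> carrier_mat n n \<Longrightarrow> neumann n A k \<in> carrier_mat n n"
  by (induction k) auto

lemma neumann_telescope:
  assumes A: "A \<in> carrier_mat n n"
  shows "(1\<^sub>m n - A) * neumann n A k = 1\<^sub>m n - A ^\<^sub>m k"
proof (induction k)
  case 0
  with A show ?case by (intro eq_matI) auto
next
  case (Suc k)
  let ?N = "neumann n A k"
  have N: "?N \<in> carrier_mat n n" using A by simp
  have I: "1\<^sub>m n - A \<in> carrier_mat n n" using A by (intro minus_carrier_mat) auto
  have "(1\<^sub>m n - A) * neumann n A (Suc k) = (1\<^sub>m n - A) + (1\<^sub>m n - A) * (A * ?N)"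
    by (simp add: mult_add_distrib_mat[OF I one_carrier_mat mult_carrier_mat[OF A N]]
        right_mult_one_mat[OF I])
  also have "(1\<^sub>m n - A) * (A * ?N) = ((1\<^sub>m n - A) * A) * ?N"
    using assoc_mult_mat[OF I A N] ..
  also have "(1\<^sub>m n - A) * A = A * (1\<^sub>m n - A)"
    using A by (simp add: minus_mult_distrib_mat[OF one_carrier_mat A A]
        mult_minus_distrib_mat[OF A one_carrier_mat A])
  also have "(A * (1\<^sub>m n - A)) * ?N = A * (1\<^sub>m n - A ^\<^sub>m k)"
    using assoc_mult_mat[OF A I N] Suc by simp
  also have "\<dots> = A - A ^\<^sub>m Suc k"
    using A by (simp add: mult_minus_distrib_mat[OF A one_carrier_mat pow_carrier_mat[OF A]]
        pow_mat_Suc_left del: pow_mat.simps(2))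
  finally show ?case
    using A by (intro eq_matI) auto
qed

lemma the_mat_inverse_eqI:
  fixes A B :: "'a :: field mat"
  assumes A: "A \<in> carrier_mat n n" and B: "B \<in> carrier_mat n n" and AB: "A * B = 1\<^sub>m n"
  shows "the (mat_inverse A) = B"
proof (cases "mat_inverse A")
  case None
  have "B * A = 1\<^sub>m n"
    by (rule mat_mult_left_right_inverse[OF A B AB])
  with A B AB have "A \<in> Units (ring_mat TYPE('a) n ())"
    by (auto simp: Units_def ring_mat_def)
  with mat_inverse(1)[OF A None] show ?thesis
    by contradiction
next
  case (Some C)
  with mat_inverse(2)[OF A] have C: "C * A = 1\<^sub>m n" "C \<in> carrier_mat n n"
    by auto
  have "C = C * (A * B)"
    using AB C by simp
  also have "\<dots> = (C * A) * B"
    using assoc_mult_mat[OF C(2) A B] ..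
  also have "\<dots> = B"
    using B C by simp
  finally show ?thesis
    using Some by simp
qed

lemma LamS_carrier[simp]: "LamS n E \<in> carrier_mat n n"
  by (simp add: LamS_def)

lemma LamS_nilpotent: "is_dag n E \<Longrightarrow> LamS n E ^\<^sub>m n = 0\<^sub>m n n"
  by (rule dag_supported_pow_mat_eq_zero) (auto simp: LamS_def split: if_splits)

lemma map_I_minus_LamS: "map_mat (\<lambda>p. peval p x) (1\<^sub>m n - LamS n E) = 1\<^sub>m n - LamR n E x"
  by (rule eq_matI) (auto simp: LamS_def LamR_def hom_distribs)

lemma map_OmS: "map_mat (\<lambda>p. peval p x) (OmS n) = OmR n x"
  by (rule eq_matI) (auto simp: OmS_def OmR_def)

lemma I_minus_LamR_mult_neumann:
  assumes "is_dag n E"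
  shows "(1\<^sub>m n - LamR n E x) * map_mat (\<lambda>p. peval p x) (neumann n (LamS n E) n) = 1\<^sub>m n"
proof -
  let ?N = "neumann n (LamS n E) n"
  have "(1\<^sub>m n - LamS n E) * ?N = 1\<^sub>m n - 0\<^sub>m n n"
    by (simp only: neumann_telescope[OF LamS_carrier] LamS_nilpotent[OF assms])
  also have "\<dots> = 1\<^sub>m n"
    by (rule eq_matI) auto
  finally have "map_mat (\<lambda>p. peval p x) ((1\<^sub>m n - LamS n E) * ?N) = 1\<^sub>m n"
    by (simp only: peval.mat_hom_one)
  moreover have "map_mat (\<lambda>p. peval p x) ((1\<^sub>m n - LamS n E) * ?N) =
      (1\<^sub>m n - LamR n E x) * map_mat (\<lambda>p. peval p x) ?N"
    unfolding map_I_minus_LamS[symmetric]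
    by (rule peval.mat_hom_mult[of _ n n _ n]) (auto intro: minus_carrier_mat)
  ultimately show ?thesis
    by simp
qed

lemma mat_inverse_I_minus_LamR:
  "is_dag n E \<Longrightarrow> the (mat_inverse (1\<^sub>m n - LamR n E x)) =
    map_mat (\<lambda>p. peval p x) (neumann n (LamS n E) n)"
  by (rule the_mat_inverse_eqI[OF _ _ I_minus_LamR_mult_neumann]) (auto simp: LamR_def)

lemma map_SigmaS_eq_phiR:
  assumes "is_dag n E"
  shows "map_mat (\<lambda>p. peval p x) (SigmaS n E) = phiR n E x"
proof -
  let ?N = "neumann n (LamS n E) n"
  have N: "?N \<in> carrier_mat n n" and NT: "?N\<^sup>T \<in> carrier_mat n n"
    and O: "OmS n \<in> carrier_mat n n"
    by (auto simp: OmS_def)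
  have "map_mat (\<lambda>p. peval p x) (?N\<^sup>T * OmS n * ?N) =
      map_mat (\<lambda>p. peval p x) (?N\<^sup>T) * map_mat (\<lambda>p. peval p x) (OmS n) *
      map_mat (\<lambda>p. peval p x) ?N"
    by (simp add: peval.mat_hom_mult[OF mult_carrier_mat[OF NT O] N]
        peval.mat_hom_mult[OF NT O])
  then show ?thesis
    unfolding SigmaS_def phiR_def Let_def mat_inverse_I_minus_LamR[OF assms]
    by (simp add: map_mat_transpose map_OmS)
qed

lemma map_mat_submatrix: "map_mat h (submatrix A I J) = submatrix (map_mat h A) I J"
  by (rule eq_matI) (auto simp: submatrix_def dim_submatrix pick_le)

lemma peval_pullback_det:
  "is_dag n E \<Longrightarrow>
    peval (pullback_det n E i j K) x = det (submatrix (phiR n E x) ({i} \<union> K) ({j} \<union> K))"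
  unfolding pullback_det_def peval.hom_det[symmetric] map_mat_submatrix map_SigmaS_eq_phiR ..

lemma pd_congruence_diagonal_pos:
  fixes A B D :: "real mat"
  assumes A: "A \<in> carrier_mat n n" and B: "B \<in> carrier_mat n n" and D: "D \<in> carrier_mat n n"
    and BA: "B * A = 1\<^sub>m n" and pd: "pd_mat n (B\<^sup>T * D * B)" and a: "a < n"
  shows "D $$ (a, a) > 0"
proof -
  define e :: "real vec" where "e = unit_vec n a"
  define v where "v = A *\<^sub>v e"
  have e: "e \<in> carrier_vec n" and v: "v \<in> carrier_vec n" and De: "D *\<^sub>v e \<in> carrier_vec n"
    using A D by (auto simp: e_def v_def)
  have Bv: "B *\<^sub>v v = e"
    using A B e BA by (simp add: v_def assoc_mult_mat_vec[symmetric, of _ n n _ n])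
  have "e \<noteq> 0\<^sub>v n"
    using a by (simp add: e_def)
  with Bv B have "v \<noteq> 0\<^sub>v n"
    by auto
  then have "0 < v \<bullet> ((B\<^sup>T * D * B) *\<^sub>v v)"
    using pd v by (auto simp: pd_mat_def)
  also have "(B\<^sup>T * D * B) *\<^sub>v v = B\<^sup>T *\<^sub>v (D *\<^sub>v e)"
    using B D v e by (simp add: Bv assoc_mult_mat_vec[of _ n n _ n])
  also have "v \<bullet> (B\<^sup>T *\<^sub>v (D *\<^sub>v e)) = (D *\<^sub>v e) \<bullet> (B *\<^sub>v v)"
    using B v De transpose_vec_mult_scalar[OF B v De] by (simp add: comm_scalar_prod[of _ n])
  also have "\<dots> = D $$ (a, a)"
    using D a by (simp add: Bv e_def)
  finally show ?thesis .
qed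

lemma pd_phiR_imp_Om_pos:
  assumes dag: "is_dag n E" and pd: "pd_mat n (phiR n E x)" and a: "a < n"
  shows "x (Om a) > 0"
proof -
  let ?A = "1\<^sub>m n - LamR n E x"
  let ?B = "map_mat (\<lambda>p. peval p x) (neumann n (LamS n E) n)"
  have A: "?A \<in> carrier_mat n n" and B: "?B \<in> carrier_mat n n"
    by (auto simp: LamR_def intro: minus_carrier_mat)
  have "?B * ?A = 1\<^sub>m n"
    by (rule mat_mult_left_right_inverse[OF A B I_minus_LamR_mult_neumann[OF dag]])
  moreover have "phiR n E x = ?B\<^sup>T * OmR n x * ?B"
    unfolding phiR_def Let_def mat_inverse_I_minus_LamR[OF dag] ..
  ultimately have "OmR n x $$ (a, a) > 0"
    using pd_congruence_diagonal_pos[OF A B _ _ _ a] pd by (simp add: OmR_def)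
  with a show ?thesis
    by (simp add: OmR_def)
qed

lemma pd_mat_in_model_iff:
  assumes "is_dag n E" "pd_mat n S"
  shows "S \<in> model n E \<longleftrightarrow> S \<in> range (phiR n E)"
  using assms pd_phiR_imp_Om_pos by (auto simp: model_def)

theorem theorem3p4:
  fixes n i j :: nat and E :: "(nat \<times> nat) set" and K :: "nat set" and fs :: "rpoly list"
  assumes "is_dag n E"
    and "i < n" and "j < n" and "i \<noteq> j"
    and "K \<subseteq> {0..<n} - {i, j}"
    and "\<not> d_separates E K i j"
    and "\<forall>f\<in>set fs. irreducible_in (param_ring n E) f"
    and "pullback_det n E i j K = prod_list fs"
  shows "model n E \<inter> ci_model n i j K =
         (\<Union>f\<in>set fs. phiR n E ` {x. peval f x = 0}) \<inter> {S. pd_mat n S}"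
proof -
  have "det (submatrix (phiR n E x) ({i} \<union> K) ({j} \<union> K)) = (\<Prod>f\<leftarrow>fs. peval f x)" for x
    using peval_pullback_det[OF assms(1)] assms(8) peval.hom_prod_list by metis
  then have det_zero_iff: "det (submatrix (phiR n E x) ({i} \<union> K) ({j} \<union> K)) = 0 \<longleftrightarrow>
      (\<exists>f\<in>set fs. peval f x = 0)" for x
    by (auto simp: prod_list_zero_iff simp del: peval.prod_list_map_hom)
  show ?thesis
    using pd_mat_in_model_iff[OF assms(1)] det_zero_iff
    by (auto simp: ci_model_def) blast
qed

end
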